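(* For every $a\in\frac12\mathbb N$, the two-dimensional representation $\mathcal D_{\frac12}$ of $\mathfrak{sl}(2,\mathbb C)$ occurs neither in $\mathcal S^3(\mathcal D_a)$ nor in $\Lambda^3(\mathcal D_a)$; hence every occurrence of $\mathcal D_{\frac12}$ in $\mathcal D_a^{\otimes 3}$ lies in the mixed-symmetry part $M(\mathcal D_a)$. Consequently, for $a,b\in\frac12\mathbb N$, any $\mathfrak{so}(1,3)$-equivariant map $\mathcal S^3(\mathcal D_{a,b})\to\mathcal D_{\frac12,\frac12}$ arises from $M(\mathcal D_{a,0})\otimes M(\mathcal D_{0,b})$ (it is of "mixed type"). *)

theory Defs
  imports Complex_Main
begin

text \<open>Concrete model of the irreducible sl(2,C)-module D_a, a = k/2 (k :: nat),
  of dimension k+1 with basis e_0,...,e_k (e_0 highest weight). Standard basis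
  E,F,H of sl(2,C) acts by
    H e_j = (k - 2j) e_j,  E e_j = j(k-j+1) e_(j-1),  F e_j = e_(j+1) (F e_k = 0).\<close>

definition Dsp :: "nat \<Rightarrow> (nat \<Rightarrow> complex) set" where
  "Dsp k = {v. \<forall>i. k < i \<longrightarrow> v i = 0}"

definition rH :: "nat \<Rightarrow> (nat \<Rightarrow> complex) \<Rightarrow> nat \<Rightarrow> complex" where
  "rH k v = (\<lambda>i. complex_of_int (int k - 2 * int i) * v i)"

definition rE :: "nat \<Rightarrow> (nat \<Rightarrow> complex) \<Rightarrow> nat \<Rightarrow> complex" where
  "rE k v = (\<lambda>i. of_nat (Suc i) * of_nat (k - i) * v (Suc i))"

definition rF :: "nat \<Rightarrow> (nat \<Rightarrow> complex) \<Rightarrow> nat \<Rightarrow> complex" where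
  "rF k v = (\<lambda>i. if i = 0 \<or> k < i then 0 else v (i - 1))"

definition lin_on :: "('a \<Rightarrow> complex) set \<Rightarrow> (('a \<Rightarrow> complex) \<Rightarrow> 'b \<Rightarrow> complex) \<Rightarrow> bool" where
  "lin_on S \<phi> \<longleftrightarrow>
     (\<forall>v\<in>S. \<forall>w\<in>S. \<phi> (\<lambda>x. v x + w x) = (\<lambda>y. \<phi> v y + \<phi> w y)) \<and>
     (\<forall>c. \<forall>v\<in>S. \<phi> (\<lambda>x. c * v x) = (\<lambda>y. c * \<phi> v y))"

definition intertwines :: "'x set \<Rightarrow> ('x \<Rightarrow> 'y) \<Rightarrow> ('x \<Rightarrow> 'x) \<Rightarrow> ('y \<Rightarrow> 'y) \<Rightarrow> bool" where
  "intertwines S \<phi> X Y \<longleftrightarrow> (\<forall>v\<in>S. \<phi> (X v) = Y (\<phi> v))"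

definition tens3 :: "('a \<Rightarrow> bool) \<Rightarrow> ('a \<times> 'a \<times> 'a \<Rightarrow> complex) set" where
  "tens3 P = {t. \<forall>x1 x2 x3. t (x1, x2, x3) \<noteq> 0 \<longrightarrow> P x1 \<and> P x2 \<and> P x3}"

definition cube3 :: "(('a \<Rightarrow> complex) \<Rightarrow> 'a \<Rightarrow> complex) \<Rightarrow> ('a \<times> 'a \<times> 'a \<Rightarrow> complex) \<Rightarrow> 'a \<times> 'a \<times> 'a \<Rightarrow> complex" where
  "cube3 X t = (\<lambda>(x1, x2, x3). X (\<lambda>y. t (y, x2, x3)) x1 + X (\<lambda>y. t (x1, y, x3)) x2
                               + X (\<lambda>y. t (x1, x2, y)) x3)"

definition S3 :: "('a \<Rightarrow> bool) \<Rightarrow> ('a \<times> 'a \<times> 'a \<Rightarrow> complex) set" where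
  "S3 P = {t \<in> tens3 P. \<forall>x1 x2 x3.
      t (x2, x1, x3) = t (x1, x2, x3) \<and> t (x1, x3, x2) = t (x1, x2, x3)}"

definition L3 :: "('a \<Rightarrow> bool) \<Rightarrow> ('a \<times> 'a \<times> 'a \<Rightarrow> complex) set" where
  "L3 P = {t \<in> tens3 P. \<forall>x1 x2 x3.
      t (x2, x1, x3) = - t (x1, x2, x3) \<and> t (x1, x3, x2) = - t (x1, x2, x3)}"

text \<open>Symmetrizer and antisymmetrizer; the mixed-symmetry part M(V) is the
  complement of S^3 V (+) Lambda^3 V, i.e. the common kernel of both projectors.\<close>
definition symz :: "('a \<times> 'a \<times> 'a \<Rightarrow> complex) \<Rightarrow> 'a \<times> 'a \<times> 'a \<Rightarrow> complex" where
  "symz t = (\<lambda>(x1, x2, x3). (t (x1, x2, x3) + t (x2, x3, x1) + t (x3, x1, x2)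
                           + t (x2, x1, x3) + t (x1, x3, x2) + t (x3, x2, x1)) / 6)"

definition altz :: "('a \<times> 'a \<times> 'a \<Rightarrow> complex) \<Rightarrow> 'a \<times> 'a \<times> 'a \<Rightarrow> complex" where
  "altz t = (\<lambda>(x1, x2, x3). (t (x1, x2, x3) + t (x2, x3, x1) + t (x3, x1, x2)
                           - t (x2, x1, x3) - t (x1, x3, x2) - t (x3, x2, x1)) / 6)"

definition M3 :: "('a \<Rightarrow> bool) \<Rightarrow> ('a \<times> 'a \<times> 'a \<Rightarrow> complex) set" where
  "M3 P = {t \<in> tens3 P. symz t = (\<lambda>_. 0) \<and> altz t = (\<lambda>_. 0)}"

definition D_half_embedding ::
  "('v \<Rightarrow> complex) set \<Rightarrow> (('v \<Rightarrow> complex) \<Rightarrow> ('v \<Rightarrow> complex)) \<Rightarrow>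
   (('v \<Rightarrow> complex) \<Rightarrow> ('v \<Rightarrow> complex)) \<Rightarrow> (('v \<Rightarrow> complex) \<Rightarrow> ('v \<Rightarrow> complex)) \<Rightarrow>
   ((nat \<Rightarrow> complex) \<Rightarrow> ('v \<Rightarrow> complex)) \<Rightarrow> bool" where
  "D_half_embedding W E' F' H' \<phi> \<longleftrightarrow>
     lin_on (Dsp 1) \<phi> \<and> inj_on \<phi> (Dsp 1) \<and> \<phi> ` Dsp 1 \<subseteq> W \<and>
     intertwines (Dsp 1) \<phi> (rE 1) E' \<and> intertwines (Dsp 1) \<phi> (rF 1) F' \<and>
     intertwines (Dsp 1) \<phi> (rH 1) H'"

definition D_half_occurs_in :: "nat \<Rightarrow> (nat \<times> nat \<times> nat \<Rightarrow> complex) set \<Rightarrow> bool" where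
  "D_half_occurs_in k W \<longleftrightarrow>
     (\<exists>\<phi>. D_half_embedding W (cube3 (rE k)) (cube3 (rF k)) (cube3 (rH k)) \<phi>)"

text \<open>so(1,3) modules: complexified so(1,3) = sl(2,C) (+) sl(2,C);
  D_(a,b) = D_a (x) D_b with coordinates indexed by pairs (i,j).
  act_fst / act_snd: action of the left / right sl(2) factor.\<close>
definition act_fst :: "((nat \<Rightarrow> complex) \<Rightarrow> nat \<Rightarrow> complex) \<Rightarrow> (nat \<times> nat \<Rightarrow> complex) \<Rightarrow> nat \<times> nat \<Rightarrow> complex" where
  "act_fst X t = (\<lambda>(i, j). X (\<lambda>i'. t (i', j)) i)"

definition act_snd :: "((nat \<Rightarrow> complex) \<Rightarrow> nat \<Rightarrow> complex) \<Rightarrow> (nat \<times> nat \<Rightarrow> complex) \<Rightarrow> nat \<times> nat \<Rightarrow> complex" where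
  "act_snd X t = (\<lambda>(i, j). X (\<lambda>j'. t (i, j')) j)"

definition Dsp2 :: "nat \<Rightarrow> nat \<Rightarrow> (nat \<times> nat \<Rightarrow> complex) set" where
  "Dsp2 k l = {v. \<forall>i j. v (i, j) \<noteq> 0 \<longrightarrow> i \<le> k \<and> j \<le> l}"

definition supp2 :: "nat \<Rightarrow> nat \<Rightarrow> nat \<times> nat \<Rightarrow> bool" where
  "supp2 k l = (\<lambda>(i, j). i \<le> k \<and> j \<le> l)"

definition so13_equivariant_S3 :: "nat \<Rightarrow> nat \<Rightarrow>
    (((nat \<times> nat) \<times> (nat \<times> nat) \<times> (nat \<times> nat) \<Rightarrow> complex) \<Rightarrow> nat \<times> nat \<Rightarrow> complex) \<Rightarrow> bool" where
  "so13_equivariant_S3 k l \<psi> \<longleftrightarrow>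
     (let S = S3 (supp2 k l) in
      lin_on S \<psi> \<and> \<psi> ` S \<subseteq> Dsp2 1 1 \<and>
      intertwines S \<psi> (cube3 (act_fst (rE k))) (act_fst (rE 1)) \<and>
      intertwines S \<psi> (cube3 (act_fst (rF k))) (act_fst (rF 1)) \<and>
      intertwines S \<psi> (cube3 (act_fst (rH k))) (act_fst (rH 1)) \<and>
      intertwines S \<psi> (cube3 (act_snd (rE l))) (act_snd (rE 1)) \<and>
      intertwines S \<psi> (cube3 (act_snd (rF l))) (act_snd (rF 1)) \<and>
      intertwines S \<psi> (cube3 (act_snd (rH l))) (act_snd (rH 1)))"

definition tprod :: "(nat \<times> nat \<times> nat \<Rightarrow> complex) \<Rightarrow> (nat \<times> nat \<times> nat \<Rightarrow> complex) \<Rightarrow>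
    (nat \<times> nat) \<times> (nat \<times> nat) \<times> (nat \<times> nat) \<Rightarrow> complex" where
  "tprod t u = (\<lambda>((i1, j1), (i2, j2), (i3, j3)). t (i1, i2, i3) * u (j1, j2, j3))"

end

theory Submission
  imports Defs "HOL-Computational_Algebra.Polynomial" "HOL-Library.Indicator_Function"
begin

text \<open>
  Everything rests on one vanishing statement: a tensor w in D_a (x) D_a (x) D_a (a = k/2) that
  is invariant under cyclic permutation of the factors, is killed by the lowering operator F and
  has weight -1 is zero. Encode w by its generating polynomial P(x,y,z). Since F acts as
  multiplication by x + y + z on C[x,y,z]/(x^(k+1), y^(k+1), z^(k+1)), cyclicity gives
  (x + y + z) P = x^(k+1) C(y,z) + y^(k+1) C(z,x) + z^(k+1) C(x,y), where C is the binary form of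
  degree d = (k+1)/2 read off from the top slice of w. On the plane x + y + z = 0, parametrised so
  that multiplying the parameter by a cube root of unity rotates the point cyclically, the
  right-hand side becomes T(u) + T(omega u) + T(omega^2 u) with T = (1 + u)^(2d) times a polynomial
  of degree d. Hence T has at most 2d nonzero coefficients, and a multiple of (1 + u)^N with at
  most N monomials is zero. So C = 0, and descending along F gives w = 0.

  The symmetriser and the antisymmetriser commute with sl(2) and produce cyclic tensors, so they
  kill the lowest weight vector of any copy of D_(1/2) in the tensor cube; this gives the
  statements about S^3, Lambda^3 and the mixed part M. For an so(1,3)-equivariant psi, fixing the
  second factor u of t (x) u leaves an sl(2)-map into two copies of D_(1/2). Its highest weight
  coefficient is a functional whose values on a basis, reflected by i |-> k - i, again form a
  cyclic F-annihilated tensor of weight -1, so it vanishes.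
\<close>

section \<open>Sparse multiples of powers of 1 + X\<close>

lemma finite_coeff_support: "finite {e. coeff p e \<noteq> 0}"
  by (rule finite_subset[of _ "{..degree p}"]) (auto intro: le_degree)

lemma one_plus_X_power_mult_eq_0_if_sparse:
  fixes q :: "'a :: {idom, ring_char_0} poly"
  assumes "card {e. coeff ([:1, 1:] ^ N * q) e \<noteq> 0} \<le> N"
  shows "[:1, 1:] ^ N * q = 0"
  using assms
proof (induction N arbitrary: q)
  case 0
  then show ?case
    using finite_coeff_support[of q] by (auto intro: poly_eqI)
next
  case (Suc N)
  define L :: "'a poly" where "L = [:1, 1:]"
  define f where "f = L ^ Suc N * q"
  show ?case
  proof (rule ccontr)
    assume "[:1, 1:] ^ Suc N * q \<noteq> 0"
    then obtain e0 where e0: "coeff f e0 \<noteq> 0"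
      using poly_eqI[of f 0] by (auto simp: f_def L_def)
    \<comment> \<open>g = X f' - e0 f scales the e-th coefficient by e - e0: it loses the monomial of degree e0
      but keeps the factor (1 + X)^N.\<close>
    define g where "g = pCons 0 (pderiv f) - smult (of_nat e0) f"
    have coeff_g: "coeff g e = (of_nat e - of_nat e0) * coeff f e" for e
      by (cases e) (auto simp: g_def coeff_pderiv algebra_simps)
    have "pderiv L = 1"
      by (simp add: L_def pderiv_pCons)
    then have "pderiv f = L ^ N * (smult (of_nat (Suc N)) q + L * pderiv q)"
      unfolding f_def pderiv_mult pderiv_power_Suc by (simp add: power_Suc2 algebra_simps del: power_Suc)
    moreover have "pCons 0 (r * s) = r * pCons 0 s" for r s :: "'a poly"
      by simp
    ultimately have "g = L ^ N * (pCons 0 (smult (of_nat (Suc N)) q + L * pderiv q) - smult (of_nat e0) (L * q))"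
      by (simp add: g_def f_def power_Suc2 mult.assoc right_diff_distrib del: power_Suc)
    moreover have "card {e. coeff g e \<noteq> 0} \<le> N"
    proof -
      have "card {e. coeff g e \<noteq> 0} \<le> card ({e. coeff f e \<noteq> 0} - {e0})"
        by (rule card_mono) (auto simp: coeff_g finite_coeff_support)
      also have "\<dots> \<le> N"
        using e0 Suc.prems finite_coeff_support[of f] by (simp add: f_def L_def)
      finally show ?thesis .
    qed
    ultimately have "g = 0"
      using Suc.IH unfolding L_def by metis
    then have "f = monom (coeff f e0) e0"
      by (intro poly_eqI) (metis coeff_g coeff_0 coeff_monom mult_eq_0_iff of_nat_eq_iff right_minus_eq)
    moreover have "poly f (-1) = 0"
      by (simp add: f_def L_def)
    ultimately show False
      using e0 by (metis poly_monom mult_eq_0_iff power_eq_0_iff neg_one_neq_zero)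
  qed
qed

section \<open>Binary forms on the plane x + y + z = 0\<close>

definition omega :: complex where "omega = Complex (-1/2) (sqrt 3 / 2)"

lemma omega_sq_add_omega_add_1: "omega\<^sup>2 + omega + 1 = 0"
  by (simp add: omega_def complex_eq_iff power2_eq_square)

lemma omega_cube: "omega ^ 3 = 1"
proof -
  have "omega ^ 3 - 1 = (omega - 1) * (omega\<^sup>2 + omega + 1)"
    by (simp add: algebra_simps power2_eq_square power3_eq_cube)
  then show ?thesis
    using omega_sq_add_omega_add_1 by simp
qed

lemma omega_power_mult_3: "omega ^ (3 * j) = 1"
  by (simp add: power_mult omega_cube)

lemma omega_neq_1: "omega \<noteq> 1"
  by (simp add: omega_def complex_eq_iff)

lemma omega_neq_0: "omega \<noteq> 0"
  by (simp add: omega_def complex_eq_iff)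

lemma coeff_eq_0_if_rotation_sum_eq_0:
  assumes sum0: "\<And>u. poly p u + poly p (omega * u) + poly p (omega\<^sup>2 * u) = 0"
    and "3 dvd i"
  shows "coeff p i = 0"
proof -
  define q where "q = p + p \<circ>\<^sub>p [:0, omega:] + p \<circ>\<^sub>p [:0, omega\<^sup>2:]"
  have "q = 0"
    using sum0 by (simp add: q_def poly_pcompose poly_all_0_iff_0[symmetric] mult.commute)
  moreover obtain j where "i = 3 * j"
    using \<open>3 dvd i\<close> by blast
  then have "coeff q i = 3 * coeff p i"
    using omega_power_mult_3[of j] omega_power_mult_3[of "2 * j"]
    by (simp add: q_def coeff_pcompose_linear flip: power_mult)
  ultimately show ?thesis
    by simp
qed

lemma card_non_multiples_of_3: "card {e::nat. e \<le> 3 * d \<and> \<not> 3 dvd e} = 2 * d"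
proof (induction d)
  case 0
  then show ?case
    by simp presburger
next
  case (Suc d)
  have "{e::nat. e \<le> 3 * Suc d \<and> \<not> 3 dvd e} = insert (3 * d + 1) (insert (3 * d + 2) {e. e \<le> 3 * d \<and> \<not> 3 dvd e})"
    by auto presburger+
  then show ?case
    using Suc by simp
qed

definition binary_form :: "(nat \<Rightarrow> nat \<Rightarrow> complex) \<Rightarrow> nat \<Rightarrow> complex \<Rightarrow> complex \<Rightarrow> complex" where
  "binary_form c M a b = (\<Sum>p\<le>M. \<Sum>q\<le>M. c p q * a ^ p * b ^ q)"

lemma binary_form_scale:
  assumes "\<And>p q. c p q \<noteq> 0 \<Longrightarrow> p + q = d"
  shows "binary_form c M (l * a) (l * b) = l ^ d * binary_form c M a b"
  unfolding binary_form_def sum_distrib_left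
proof (intro sum.cong refl)
  fix p q
  show "c p q * (l * a) ^ p * (l * b) ^ q = l ^ d * (c p q * a ^ p * b ^ q)"
    using assms[of p q] by (cases "c p q = 0") (auto simp: power_mult_distrib power_add)
qed

lemma binary_form_coeff_eq_0_if_cofinite_zeros:
  assumes supp: "\<And>p q. c p q \<noteq> 0 \<Longrightarrow> p \<le> M \<and> q \<le> M \<and> p + q = d"
    and zeros: "finite {a. binary_form c M a 1 \<noteq> 0}"
  shows "c p q = 0"
proof -
  define Cp where "Cp = (\<Sum>p'\<le>M. monom (\<Sum>q'\<le>M. c p' q') p')"
  have poly_Cp: "poly Cp a = binary_form c M a 1" for a
    by (simp add: Cp_def binary_form_def poly_sum poly_monom sum_distrib_right)
  have "Cp = 0"
  proof (rule ccontr)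
    assume "Cp \<noteq> 0"
    then have "finite {a. poly Cp a = 0}"
      by (rule poly_roots_finite)
    with zeros have "finite ({a. poly Cp a = 0} \<union> {a. binary_form c M a 1 \<noteq> 0})"
      by blast
    moreover have "{a. poly Cp a = 0} \<union> {a. binary_form c M a 1 \<noteq> 0} = UNIV"
      by (auto simp: poly_Cp)
    ultimately show False
      by (simp add: infinite_UNIV_char_0)
  qed
  show "c p q = 0"
  proof (rule ccontr)
    assume "c p q \<noteq> 0"
    then have pq: "p \<le> M" "q \<le> M" "p + q = d"
      using supp by auto
    have "coeff Cp p = (\<Sum>q'\<le>M. c p q')"
      using pq by (simp add: Cp_def coeff_sum coeff_monom)
    also have "\<dots> = (\<Sum>q'\<le>M. if q' = q then c p q else 0)"
      using supp pq by (intro sum.cong) fastforce+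
    also have "\<dots> = c p q"
      using pq by simp
    finally show False
      using \<open>Cp = 0\<close> \<open>c p q \<noteq> 0\<close> by simp
  qed
qed

lemma binary_form_at_1_eq_0_if_vanishes_on_line:
  assumes supp: "\<And>p q. c p q \<noteq> 0 \<Longrightarrow> p + q = d"
    and line: "\<And>u. binary_form c M (omega * u + omega\<^sup>2) (omega\<^sup>2 * u + omega) = 0"
    and "a \<noteq> omega\<^sup>2"
  shows "binary_form c M a 1 = 0"
proof -
  \<comment> \<open>(a, 1) is the multiple by s of the point of the line with parameter u.\<close>
  define s where "s = (omega * a - 1) / (1 - omega)"
  define u where "u = omega * (1 / s - omega)"
  have "omega * a \<noteq> 1"
  proof
    assume "omega * a = 1"
    have "a = omega ^ 3 * a"
      by (simp add: omega_cube)
    also have "\<dots> = omega\<^sup>2 * (omega * a)"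
      by (simp add: power2_eq_square power3_eq_cube mult.assoc)
    finally show False
      using \<open>omega * a = 1\<close> \<open>a \<noteq> omega\<^sup>2\<close> by simp
  qed
  then have "s \<noteq> 0"
    using omega_neq_1 by (simp add: s_def)
  have "s * (omega\<^sup>2 * u + omega) = 1"
    using \<open>s \<noteq> 0\<close> omega_cube by (simp add: u_def field_simps power2_eq_square power3_eq_cube)
  moreover have "s * (omega * u + omega\<^sup>2) = a"
  proof -
    have "s * (omega * u + omega\<^sup>2) = omega\<^sup>2 + s * (omega\<^sup>2 - 1)"
      using \<open>s \<noteq> 0\<close> omega_cube by (simp add: u_def field_simps power2_eq_square power3_eq_cube)
    also have "s * (omega\<^sup>2 - 1) = - (omega * a - 1) * (omega + 1)"
      using omega_neq_1 by (simp add: s_def field_simps power2_eq_square)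
    also have "omega\<^sup>2 + - (omega * a - 1) * (omega + 1) = (omega\<^sup>2 + omega + 1) * (1 - a) + a"
      by (simp add: algebra_simps power2_eq_square)
    finally show ?thesis
      by (simp add: omega_sq_add_omega_add_1)
  qed
  ultimately show ?thesis
    using binary_form_scale[OF supp, where M = M and l = s and a = "omega * u + omega\<^sup>2"
        and b = "omega\<^sup>2 * u + omega"] line[of u]
    by simp
qed

lemma binary_form_coeff_eq_0_if_vanishes_on_line:
  assumes supp: "\<And>p q. c p q \<noteq> 0 \<Longrightarrow> p \<le> M \<and> q \<le> M \<and> p + q = d"
    and line: "\<And>u. binary_form c M (omega * u + omega\<^sup>2) (omega\<^sup>2 * u + omega) = 0"
  shows "c p q = 0"
proof (rule binary_form_coeff_eq_0_if_cofinite_zeros[OF supp])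
  have "{a. binary_form c M a 1 \<noteq> 0} \<subseteq> {omega\<^sup>2}"
    using binary_form_at_1_eq_0_if_vanishes_on_line[of c d M] supp line by blast
  then show "finite {a. binary_form c M a 1 \<noteq> 0}"
    by (rule finite_subset) simp
qed

definition line_term :: "(nat \<Rightarrow> nat \<Rightarrow> complex) \<Rightarrow> nat \<Rightarrow> nat \<Rightarrow> complex \<Rightarrow> complex" where
  "line_term c M d u = (u + 1) ^ (2 * d) * binary_form c M (omega * u + omega\<^sup>2) (omega\<^sup>2 * u + omega)"

lemma line_term_rotation_sum:
  assumes supp: "\<And>p q. c p q \<noteq> 0 \<Longrightarrow> p + q = d"
    and plane: "\<And>x y z. x + y + z = 0 \<Longrightarrow>
      x ^ (2 * d) * binary_form c M y z + y ^ (2 * d) * binary_form c M z x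
        + z ^ (2 * d) * binary_form c M x y = 0"
  shows "line_term c M d u + line_term c M d (omega * u) + line_term c M d (omega\<^sup>2 * u) = 0"
proof -
  define G where "G x y z = x ^ (2 * d) * binary_form c M y z" for x y z
  have G_scale: "G (l * x) (l * y) (l * z) = l ^ (3 * d) * G x y z" for l x y z
  proof -
    have "G (l * x) (l * y) (l * z) = (l ^ d * l ^ d * l ^ d) * G x y z"
      using binary_form_scale[OF supp, where M = M and l = l and a = y and b = z]
      by (simp add: G_def power_mult_distrib mult_2 mult_2_right power_add mult_ac)
    then show ?thesis
      by (simp add: power_mult power3_eq_cube power_mult_distrib)
  qed
  have G_omega: "G (omega * x) (omega * y) (omega * z) = G x y z"
    and G_omega2: "G (omega\<^sup>2 * x) (omega\<^sup>2 * y) (omega\<^sup>2 * z) = G x y z" for x y z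
  proof -
    have "(omega\<^sup>2) ^ (3 * d) = (omega ^ (3 * d))\<^sup>2"
      by (metis power_mult mult.commute)
    then show "G (omega * x) (omega * y) (omega * z) = G x y z"
      and "G (omega\<^sup>2 * x) (omega\<^sup>2 * y) (omega\<^sup>2 * z) = G x y z"
      by (simp_all only: G_scale omega_power_mult_3 power_one mult_1)
  qed
  \<comment> \<open>Multiplying the parameter by a cube root of unity rotates the point cyclically, up to a scalar.\<close>
  have "line_term c M d (omega\<^sup>2 * u)
      = G (omega * (omega * u + omega\<^sup>2)) (omega * (omega\<^sup>2 * u + omega)) (omega * (u + 1))"
    unfolding line_term_def G_def[symmetric] using omega_cube by (intro arg_cong3[where f = G]) algebra+
  also have "\<dots> = G (omega * u + omega\<^sup>2) (omega\<^sup>2 * u + omega) (u + 1)"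
    by (rule G_omega)
  finally have rot2: "line_term c M d (omega\<^sup>2 * u) = G (omega * u + omega\<^sup>2) (omega\<^sup>2 * u + omega) (u + 1)" .
  have "line_term c M d (omega * u)
      = G (omega\<^sup>2 * (omega\<^sup>2 * u + omega)) (omega\<^sup>2 * (u + 1)) (omega\<^sup>2 * (omega * u + omega\<^sup>2))"
    unfolding line_term_def G_def[symmetric] using omega_cube by (intro arg_cong3[where f = G]) algebra+
  also have "\<dots> = G (omega\<^sup>2 * u + omega) (u + 1) (omega * u + omega\<^sup>2)"
    by (rule G_omega2)
  finally have rot1: "line_term c M d (omega * u) = G (omega\<^sup>2 * u + omega) (u + 1) (omega * u + omega\<^sup>2)" .
  have "(u + 1) + (omega * u + omega\<^sup>2) + (omega\<^sup>2 * u + omega) = 0"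
    using omega_sq_add_omega_add_1 by algebra
  from plane[OF this] show ?thesis
    unfolding rot1 rot2 unfolding line_term_def G_def by (simp only: add_ac)
qed

lemma binary_form_on_line_poly:
  assumes supp: "\<And>p q. c p q \<noteq> 0 \<Longrightarrow> p + q = d"
  obtains C where "degree C \<le> d" "\<And>u. poly C u = binary_form c M (omega * u + omega\<^sup>2) (omega\<^sup>2 * u + omega)"
proof
  define C where "C = (\<Sum>p\<le>M. \<Sum>q\<le>M. smult (c p q) ([:omega\<^sup>2, omega:] ^ p * [:omega, omega\<^sup>2:] ^ q))"
  show "poly C u = binary_form c M (omega * u + omega\<^sup>2) (omega\<^sup>2 * u + omega)" for u
    by (simp add: C_def binary_form_def poly_sum algebra_simps)
  show "degree C \<le> d"
    unfolding C_def
  proof (intro degree_sum_le)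
    fix p q
    show "degree (smult (c p q) ([:omega\<^sup>2, omega:] ^ p * [:omega, omega\<^sup>2:] ^ q)) \<le> d"
    proof (cases "c p q = 0")
      case False
      have "degree ([:omega\<^sup>2, omega:] ^ p * [:omega, omega\<^sup>2:] ^ q) \<le> p + q"
        using degree_mult_le[of "[:omega\<^sup>2, omega:] ^ p" "[:omega, omega\<^sup>2:] ^ q"]
          degree_power_le[of "[:omega\<^sup>2, omega:]" p] degree_power_le[of "[:omega, omega\<^sup>2:]" q]
        by (simp add: omega_neq_0)
      then show ?thesis
        using supp[OF False] by simp
    qed simp
  qed auto
qed

lemma binary_form_vanishes_on_line:
  assumes supp: "\<And>p q. c p q \<noteq> 0 \<Longrightarrow> p + q = d"
    and plane: "\<And>x y z. x + y + z = 0 \<Longrightarrow>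
      x ^ (2 * d) * binary_form c M y z + y ^ (2 * d) * binary_form c M z x
        + z ^ (2 * d) * binary_form c M x y = 0"
  shows "binary_form c M (omega * u + omega\<^sup>2) (omega\<^sup>2 * u + omega) = 0"
proof -
  obtain C where deg_C: "degree C \<le> d"
    and poly_C: "\<And>u. poly C u = binary_form c M (omega * u + omega\<^sup>2) (omega\<^sup>2 * u + omega)"
    using binary_form_on_line_poly[OF supp] by blast
  define tau where "tau = [:1, 1:] ^ (2 * d) * C"
  have "degree tau \<le> 3 * d"
  proof -
    have "degree tau \<le> degree ([:1, 1 :: complex:] ^ (2 * d)) + degree C"
      unfolding tau_def by (rule degree_mult_le)
    also have "\<dots> \<le> 2 * d + d"
      using deg_C by (intro add_mono order_trans[OF degree_power_le]) auto
    finally show ?thesis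
      by simp
  qed
  have "poly tau u = line_term c M d u" for u
    by (simp add: tau_def line_term_def poly_C add.commute)
  then have "coeff tau i = 0" if "3 dvd i" for i
    using coeff_eq_0_if_rotation_sum_eq_0 line_term_rotation_sum[OF supp plane] that by metis
  then have "{e. coeff tau e \<noteq> 0} \<subseteq> {e. e \<le> 3 * d \<and> \<not> 3 dvd e}"
    using le_degree \<open>degree tau \<le> 3 * d\<close> by fastforce
  then have "card {e. coeff tau e \<noteq> 0} \<le> 2 * d"
    using card_mono[of "{e. e \<le> 3 * d \<and> \<not> 3 dvd e}"] card_non_multiples_of_3[of d] by simp
  then have "tau = 0"
    unfolding tau_def by (rule one_plus_X_power_mult_eq_0_if_sparse)
  then have "C = 0"
    by (simp add: tau_def)
  then show ?thesis
    using poly_C[of u] by simp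
qed

section \<open>Cyclic lowering-annihilated tensors of weight -1\<close>

definition weighted_shift :: "(('a \<Rightarrow> complex) \<Rightarrow> 'a \<Rightarrow> complex) \<Rightarrow> ('a \<Rightarrow> complex) \<Rightarrow> ('a \<Rightarrow> 'a) \<Rightarrow> bool" where
  "weighted_shift X g h \<longleftrightarrow> (\<forall>v i. X v i = g i * v (h i))"

lemma weighted_shift_rE: "weighted_shift (rE k) (\<lambda>i. of_nat (Suc i) * of_nat (k - i)) Suc"
  unfolding weighted_shift_def rE_def by simp

lemma weighted_shift_rF: "weighted_shift (rF k) (\<lambda>i. if i = 0 \<or> k < i then 0 else 1) (\<lambda>i. i - 1)"
  unfolding weighted_shift_def rF_def by simp

lemma weighted_shift_rH: "weighted_shift (rH k) (\<lambda>i. complex_of_int (int k - 2 * int i)) id"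
  unfolding weighted_shift_def rH_def by simp

lemma cube3_weighted_shift:
  assumes "weighted_shift X g h"
  shows "cube3 X t = (\<lambda>(a, b, c). g a * t (h a, b, c) + g b * t (a, h b, c) + g c * t (a, b, h c))"
  using assms unfolding weighted_shift_def cube3_def by simp

lemma cube3_rF_apply:
  "cube3 (rF k) w (a, b, c) =
     (if a = 0 \<or> k < a then 0 else w (a - 1, b, c)) + (if b = 0 \<or> k < b then 0 else w (a, b - 1, c))
     + (if c = 0 \<or> k < c then 0 else w (a, b, c - 1))"
  by (simp add: cube3_def rF_def)

lemma mult_power_sum_shift:
  fixes f :: "nat \<Rightarrow> 'a :: comm_ring_1"
  shows "x * (\<Sum>a\<le>k. x ^ a * f a) = (\<Sum>a\<le>k. x ^ a * (if a = 0 then 0 else f (a - 1))) + x ^ Suc k * f k"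
  by (induction k) (auto simp: algebra_simps)

definition tensor_poly :: "(nat \<times> nat \<times> nat \<Rightarrow> complex) \<Rightarrow> nat \<Rightarrow> complex \<Rightarrow> complex \<Rightarrow> complex \<Rightarrow> complex" where
  "tensor_poly w k x y z = (\<Sum>a\<le>k. x ^ a * (\<Sum>b\<le>k. \<Sum>c\<le>k. w (a, b, c) * (y ^ b * z ^ c)))"

lemma tensor_poly_rotate: "tensor_poly w k y z x = tensor_poly (\<lambda>(a, b, c). w (b, c, a)) k x y z"
proof -
  have "tensor_poly w k y z x = (\<Sum>a\<le>k. \<Sum>b\<le>k. \<Sum>c\<le>k. w (a, b, c) * (x ^ c * y ^ a * z ^ b))"
    by (simp add: tensor_poly_def sum_distrib_left mult_ac)
  also have "\<dots> = (\<Sum>a\<le>k. \<Sum>c\<le>k. \<Sum>b\<le>k. w (a, b, c) * (x ^ c * y ^ a * z ^ b))"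
    by (intro sum.cong refl sum.swap)
  also have "\<dots> = (\<Sum>c\<le>k. \<Sum>a\<le>k. \<Sum>b\<le>k. w (a, b, c) * (x ^ c * y ^ a * z ^ b))"
    by (rule sum.swap)
  finally show ?thesis
    by (simp add: tensor_poly_def sum_distrib_left mult_ac)
qed

lemma tensor_poly_mult_first_var:
  "x * tensor_poly w k x y z = tensor_poly (\<lambda>(a, b, c). if a = 0 then 0 else w (a - 1, b, c)) k x y z
     + x ^ Suc k * (\<Sum>b\<le>k. \<Sum>c\<le>k. w (k, b, c) * (y ^ b * z ^ c))"
  unfolding tensor_poly_def mult_power_sum_shift by (intro arg_cong2[where f = "(+)"] sum.cong refl) auto

lemma tensor_poly_add: "tensor_poly v k x y z + tensor_poly w k x y z = tensor_poly (\<lambda>i. v i + w i) k x y z"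
  by (simp add: tensor_poly_def sum.distrib distrib_right distrib_left)

lemma tensor_poly_cong:
  assumes "\<And>a b c. a \<le> k \<Longrightarrow> b \<le> k \<Longrightarrow> c \<le> k \<Longrightarrow> v (a, b, c) = w (a, b, c)"
  shows "tensor_poly v k x y z = tensor_poly w k x y z"
  unfolding tensor_poly_def using assms by (intro sum.cong refl arg_cong2[where f = "(*)"]) auto

lemma tensor_poly_boundary_identity:
  assumes F: "cube3 (rF k) w = (\<lambda>_. 0)"
    and cyc: "\<And>a b c. w (a, b, c) = w (b, c, a)"
  shows "(x + y + z) * tensor_poly w k x y z =
      x ^ Suc k * binary_form (\<lambda>p q. w (p, q, k)) k y z
    + y ^ Suc k * binary_form (\<lambda>p q. w (p, q, k)) k z x
    + z ^ Suc k * binary_form (\<lambda>p q. w (p, q, k)) k x y"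
proof -
  define w1 where "w1 = (\<lambda>(a, b, c). if a = 0 then 0 else w (a - 1, b, c))"
  define Q where "Q = binary_form (\<lambda>p q. w (p, q, k)) k"
  have x_mult: "x * tensor_poly w k x y z = tensor_poly w1 k x y z + x ^ Suc k * Q y z" for x y z
    unfolding tensor_poly_mult_first_var w1_def Q_def binary_form_def
    by (simp add: cyc[of k] sum_distrib_left mult_ac)
  have "(\<lambda>(a, b, c). w (b, c, a)) = w"
    using cyc by (auto simp: fun_eq_iff) (metis cyc)
  then have poly_cyclic: "tensor_poly w k y z x = tensor_poly w k x y z" for x y z
    using tensor_poly_rotate[of w k y z x] by simp
  have "(x + y + z) * tensor_poly w k x y z = x * tensor_poly w k x y z + y * tensor_poly w k y z x + z * tensor_poly w k z x y"
    by (simp add: poly_cyclic distrib_right)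
  also have "\<dots> = (tensor_poly w1 k x y z + tensor_poly w1 k y z x + tensor_poly w1 k z x y)
      + (x ^ Suc k * Q y z + y ^ Suc k * Q z x + z ^ Suc k * Q x y)"
    by (simp add: x_mult)
  also have "tensor_poly w1 k x y z + tensor_poly w1 k y z x + tensor_poly w1 k z x y = tensor_poly (cube3 (rF k) w) k x y z"
    unfolding tensor_poly_rotate[of w1 k y z x] tensor_poly_rotate[of w1 k z x y] tensor_poly_rotate[of _ k y z x] tensor_poly_add
    by (rule tensor_poly_cong) (auto simp: w1_def cube3_rF_apply; metis cyc)
  finally show ?thesis
    by (simp add: F tensor_poly_def Q_def)
qed

lemma F_annihilated_eq_0_if_top_slice_eq_0:
  assumes supp: "w \<in> tens3 (\<lambda>i. i \<le> k)"
    and F: "cube3 (rF k) w = (\<lambda>_. 0)"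
    and top: "\<And>a b. w (a, b, k) = 0"
  shows "w = (\<lambda>_. 0)"
proof -
  have outside: "w (a, b, c) = 0" if "\<not> (a \<le> k \<and> b \<le> k \<and> c \<le> k)" for a b c
    using supp that unfolding tens3_def by blast
  have "\<forall>a b. w (a, b, c) = 0" if "c \<le> k" for c
    using that
  proof (induction rule: inc_induct)
    case base
    then show ?case
      using top by simp
  next
    case (step n)
    show ?case
    proof (intro allI)
      fix a b
      have "w (a, b, n) = cube3 (rF k) w (a, b, Suc n)"
        using step by (simp add: cube3_rF_apply)
      then show "w (a, b, n) = 0"
        by (simp add: F)
    qed
  qed
  then show ?thesis
    using outside by fastforce
qed

lemma cyclic_tensor_eq_0_if_F_annihilates:
  assumes supp: "\<And>a b c. w (a, b, c) \<noteq> 0 \<Longrightarrow> a \<le> k \<and> b \<le> k \<and> c \<le> k \<and> 2 * (a + b + c) = 3 * k + 1"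
    and cyc: "\<And>a b c. w (a, b, c) = w (b, c, a)"
    and F: "cube3 (rF k) w = (\<lambda>_. 0)"
  shows "w = (\<lambda>_. 0)"
proof (cases "even k")
  case True
  have "w (a, b, c) = 0" for a b c
  proof (rule ccontr)
    assume "w (a, b, c) \<noteq> 0"
    then have "2 * (a + b + c) = 3 * k + 1"
      using supp by blast
    with True show False
      by presburger
  qed
  then show ?thesis
    by auto
next
  case False
  then obtain d where d: "Suc k = 2 * d"
    by (metis even_Suc evenE)
  have top: "w (p, q, k) = 0" for p q
  proof (rule binary_form_coeff_eq_0_if_vanishes_on_line[where c = "\<lambda>p q. w (p, q, k)" and M = k and d = d])
    show "p \<le> k \<and> q \<le> k \<and> p + q = d" if "w (p, q, k) \<noteq> 0" for p q
      using supp[OF that] d by presburger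
    show "binary_form (\<lambda>p q. w (p, q, k)) k (omega * u + omega\<^sup>2) (omega\<^sup>2 * u + omega) = 0" for u
    proof (rule binary_form_vanishes_on_line)
      show "p + q = d" if "w (p, q, k) \<noteq> 0" for p q
        using supp[OF that] d by presburger
      show "x ^ (2 * d) * binary_form (\<lambda>p q. w (p, q, k)) k y z
          + y ^ (2 * d) * binary_form (\<lambda>p q. w (p, q, k)) k z x
          + z ^ (2 * d) * binary_form (\<lambda>p q. w (p, q, k)) k x y = 0" if "x + y + z = 0" for x y z
        using tensor_poly_boundary_identity[OF F cyc, of x y z] that unfolding d by simp
    qed
  qed
  have "w \<in> tens3 (\<lambda>i. i \<le> k)"
    using supp unfolding tens3_def by blast
  then show ?thesis
    using F top by (rule F_annihilated_eq_0_if_top_slice_eq_0)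
qed

section \<open>Symmetrisers\<close>

definition Sym3 :: "complex \<Rightarrow> ('a \<Rightarrow> bool) \<Rightarrow> ('a \<times> 'a \<times> 'a \<Rightarrow> complex) set" where
  "Sym3 e P = {t \<in> tens3 P. \<forall>x1 x2 x3.
      t (x2, x1, x3) = e * t (x1, x2, x3) \<and> t (x1, x3, x2) = e * t (x1, x2, x3)}"

definition symproj :: "complex \<Rightarrow> ('a \<times> 'a \<times> 'a \<Rightarrow> complex) \<Rightarrow> 'a \<times> 'a \<times> 'a \<Rightarrow> complex" where
  "symproj e t = (\<lambda>(x1, x2, x3). (t (x1, x2, x3) + t (x2, x3, x1) + t (x3, x1, x2)
      + e * (t (x2, x1, x3) + t (x1, x3, x2) + t (x3, x2, x1))) / 6)"

lemma Sym3_tens3: "t \<in> Sym3 e P \<Longrightarrow> t \<in> tens3 P"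
  by (simp add: Sym3_def)

lemma Sym3_swap:
  assumes "t \<in> Sym3 e P"
  shows "t (b, a, c) = e * t (a, b, c)" "t (a, c, b) = e * t (a, b, c)"
  using assms unfolding Sym3_def by blast+

lemma S3_eq_Sym3: "S3 P = Sym3 1 P"
  by (simp add: S3_def Sym3_def)

lemma L3_eq_Sym3: "L3 P = Sym3 (-1) P"
  by (simp add: L3_def Sym3_def)

lemma symz_eq_symproj: "symz = symproj 1"
  by (simp add: symz_def symproj_def fun_eq_iff add_ac)

lemma altz_eq_symproj: "altz = symproj (-1)"
  by (simp add: altz_def symproj_def fun_eq_iff algebra_simps)

lemma Sym3_cyclic:
  assumes "t \<in> Sym3 e P" "e * e = 1"
  shows "t (a, b, c) = t (b, c, a)"
proof -
  have "t (a, b, c) = e * t (b, a, c)"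
    by (rule Sym3_swap(1)[OF assms(1)])
  also have "t (b, a, c) = e * t (b, c, a)"
    by (rule Sym3_swap(2)[OF assms(1)])
  finally have "t (a, b, c) = e * (e * t (b, c, a))" .
  then show ?thesis
    using assms(2) by (simp add: mult.assoc[symmetric])
qed

lemma symproj_Sym3:
  assumes "t \<in> Sym3 e P" "e * e = 1"
  shows "symproj e t = t"
proof -
  note swap = Sym3_swap[OF assms(1)]
  have "symproj e t (a, b, c) = t (a, b, c)" for a b c
    using Sym3_cyclic[OF assms, of a b c] Sym3_cyclic[OF assms, of b c a] swap[of a b c] swap[of b c a]
      swap[of a c b] assms(2)
    by (simp add: symproj_def algebra_simps) (simp add: mult.assoc[symmetric])
  then show ?thesis
    by auto
qed

lemma symproj_in_Sym3:
  assumes "t \<in> tens3 P" "e * e = 1"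
  shows "symproj e t \<in> Sym3 e P"
proof -
  have outside: "t (a, b, c) = 0" if "\<not> (P a \<and> P b \<and> P c)" for a b c
    using assms(1) that unfolding tens3_def by blast
  have "symproj e t (a, b, c) = 0" if "\<not> (P a \<and> P b \<and> P c)" for a b c
    using that by (auto simp: symproj_def outside)
  then have "symproj e t \<in> tens3 P"
    unfolding tens3_def by blast
  moreover have "symproj e t (x2, x1, x3) = e * symproj e t (x1, x2, x3)"
    "symproj e t (x1, x3, x2) = e * symproj e t (x1, x2, x3)" for x1 x2 x3
    using assms(2) by (simp_all add: symproj_def algebra_simps) (simp_all add: mult.assoc[symmetric])
  ultimately show ?thesis
    unfolding Sym3_def by blast
qed

lemma symproj_add: "symproj e (\<lambda>x. v x + w x) = (\<lambda>x. symproj e v x + symproj e w x)"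
  by (simp add: symproj_def fun_eq_iff add_divide_distrib algebra_simps)

lemma symproj_scale: "symproj e (\<lambda>x. c * v x) = (\<lambda>x. c * symproj e v x)"
  by (simp add: symproj_def fun_eq_iff algebra_simps)

lemma symproj_zero: "symproj e (\<lambda>_. 0) = (\<lambda>_. 0)"
  by (simp add: symproj_def fun_eq_iff)

lemma symproj_sum: "symproj e (\<lambda>x. \<Sum>i\<in>I. c i * v i x) = (\<lambda>x. \<Sum>i\<in>I. c i * symproj e (v i) x)"
  by (induction I rule: infinite_finite_induct) (simp_all add: symproj_add symproj_scale symproj_zero)

lemma cube3_symproj:
  assumes "weighted_shift X g h"
  shows "cube3 X (symproj e t) = symproj e (cube3 X t)"
proof (rule ext, clarify)
  fix a b c
  show "cube3 X (symproj e t) (a, b, c) = symproj e (cube3 X t) (a, b, c)"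
    unfolding cube3_weighted_shift[OF assms] symproj_def
    by (simp add: add_divide_distrib[symmetric] ring_distribs add_ac)
qed

lemma tens3_add:
  assumes "v \<in> tens3 P" "w \<in> tens3 P"
  shows "(\<lambda>x. v x + w x) \<in> tens3 P"
proof -
  have "v x \<noteq> 0 \<or> w x \<noteq> 0" if "v x + w x \<noteq> 0" for x
    using that by auto
  then show ?thesis
    using assms unfolding tens3_def by blast
qed

lemma tens3_scale: "v \<in> tens3 P \<Longrightarrow> (\<lambda>x. c * v x) \<in> tens3 P"
  unfolding tens3_def by auto

lemma Sym3_zero: "(\<lambda>_. 0) \<in> Sym3 e P"
  by (simp add: Sym3_def tens3_def)

lemma Sym3_add:
  assumes "v \<in> Sym3 e P" "w \<in> Sym3 e P"
  shows "(\<lambda>x. v x + w x) \<in> Sym3 e P"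
proof -
  have "v (b, a, c) + w (b, a, c) = e * (v (a, b, c) + w (a, b, c))"
    "v (a, c, b) + w (a, c, b) = e * (v (a, b, c) + w (a, b, c))" for a b c
    by (simp_all only: Sym3_swap[OF assms(1), where a = a and b = b and c = c]
      Sym3_swap[OF assms(2), where a = a and b = b and c = c] distrib_left)
  with assms tens3_add[OF Sym3_tens3 Sym3_tens3] show ?thesis
    unfolding Sym3_def by blast
qed

lemma Sym3_scale:
  assumes "v \<in> Sym3 e P"
  shows "(\<lambda>x. c * v x) \<in> Sym3 e P"
proof -
  have "c * v (b, a, c') = e * (c * v (a, b, c'))" "c * v (a, c', b) = e * (c * v (a, b, c'))" for a b c'
    by (simp_all only: Sym3_swap[OF assms, where a = a and b = b and c = c'] mult.left_commute)
  with assms tens3_scale[OF Sym3_tens3] show ?thesis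
    unfolding Sym3_def by blast
qed

section \<open>Copies of D_(1/2) in the tensor cube\<close>

lemma cube3_rH_apply:
  "cube3 (rH k) t (a, b, c) = of_int (3 * int k - 2 * int (a + b + c)) * t (a, b, c)"
  by (simp add: cube3_def rH_def algebra_simps)

lemma lowest_weight_cyclic_tensor_eq_0:
  assumes t: "t \<in> tens3 (\<lambda>i. i \<le> k)"
    and cyc: "\<And>a b c. t (a, b, c) = t (b, c, a)"
    and F: "cube3 (rF k) t = (\<lambda>_. 0)"
    and H: "cube3 (rH k) t = (\<lambda>x. - t x)"
  shows "t = (\<lambda>_. 0)"
proof (rule cyclic_tensor_eq_0_if_F_annihilates[OF _ cyc F])
  fix a b c
  assume nz: "t (a, b, c) \<noteq> 0"
  have "of_int (3 * int k - 2 * int (a + b + c) + 1) * t (a, b, c) = 0"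
    using fun_cong[OF H, of "(a, b, c)"] by (simp add: cube3_rH_apply algebra_simps)
  then have "3 * int k - 2 * int (a + b + c) + 1 = 0"
    using nz by (simp only: mult_eq_0_iff of_int_eq_0_iff) simp
  then have "2 * (a + b + c) = 3 * k + 1"
    by linarith
  then show "a \<le> k \<and> b \<le> k \<and> c \<le> k \<and> 2 * (a + b + c) = 3 * k + 1"
    using t nz unfolding tens3_def by blast
qed

lemma lin_on_zero:
  assumes "lin_on S \<phi>" "v \<in> S"
  shows "\<phi> (\<lambda>_. 0) = (\<lambda>_. 0)"
proof -
  have "\<phi> (\<lambda>x. 0 * v x) = (\<lambda>y. 0 * \<phi> v y)"
    using assms unfolding lin_on_def by blast
  then show ?thesis
    by simp
qed

lemma rF_1_indicator_1: "rF 1 (indicator {1}) = (\<lambda>_. 0 :: complex)"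
  by (auto simp: rF_def fun_eq_iff)

lemma rH_1_indicator_1: "rH 1 (indicator {1}) = (\<lambda>x. - 1 * indicator {1} x :: complex)"
  by (auto simp: rH_def fun_eq_iff indicator_def)

lemma rE_1_indicator_1: "rE 1 (indicator {1}) = (indicator {0} :: nat \<Rightarrow> complex)"
proof
  fix i
  show "rE 1 (indicator {1}) i = (indicator {0} i :: complex)"
    by (cases i) (simp_all add: rE_def)
qed

lemma D_half_embedding_lowest_vector:
  assumes emb: "D_half_embedding W (cube3 (rE k)) (cube3 (rF k)) (cube3 (rH k)) \<phi>"
  defines "t1 \<equiv> \<phi> (indicator {1})"
  shows "t1 \<in> W" "t1 \<noteq> (\<lambda>_. 0)" "cube3 (rF k) t1 = (\<lambda>_. 0)" "cube3 (rH k) t1 = (\<lambda>x. - t1 x)"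
    "\<phi> (indicator {0}) = cube3 (rE k) t1"
proof -
  have lin: "lin_on (Dsp 1) \<phi>" and inj: "inj_on \<phi> (Dsp 1)" and img: "\<phi> ` Dsp 1 \<subseteq> W"
    and E: "intertwines (Dsp 1) \<phi> (rE 1) (cube3 (rE k))"
    and F: "intertwines (Dsp 1) \<phi> (rF 1) (cube3 (rF k))"
    and H: "intertwines (Dsp 1) \<phi> (rH 1) (cube3 (rH k))"
    using emb unfolding D_half_embedding_def by auto
  have e1: "indicator {1} \<in> Dsp 1" and zero: "(\<lambda>_. 0) \<in> Dsp 1"
    by (simp_all add: Dsp_def)
  have \<phi>_zero: "\<phi> (\<lambda>_. 0) = (\<lambda>_. 0)"
    using lin e1 by (rule lin_on_zero)
  show "t1 \<in> W"
    using img e1 by (auto simp: t1_def)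
  show "t1 \<noteq> (\<lambda>_. 0)"
  proof
    assume "t1 = (\<lambda>_. 0)"
    then have "\<phi> (indicator {1}) = \<phi> (\<lambda>_. 0)"
      by (simp add: t1_def \<phi>_zero)
    then have "indicator {1 :: nat} = (\<lambda>_. 0 :: complex)"
      by (rule inj_onD[OF inj _ e1 zero])
    then have "indicator {1} (1 :: nat) = (0 :: complex)"
      by simp
    then show False
      by simp
  qed
  have "cube3 (rF k) t1 = \<phi> (rF 1 (indicator {1}))"
    using F e1 unfolding intertwines_def t1_def by simp
  also have "\<dots> = (\<lambda>_. 0)"
    by (simp only: rF_1_indicator_1 \<phi>_zero)
  finally show "cube3 (rF k) t1 = (\<lambda>_. 0)" .
  have "cube3 (rH k) t1 = \<phi> (rH 1 (indicator {1}))"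
    using H e1 unfolding intertwines_def t1_def by simp
  also have "\<dots> = (\<lambda>y. - 1 * t1 y)"
    unfolding rH_1_indicator_1 t1_def using lin e1 unfolding lin_on_def by blast
  finally show "cube3 (rH k) t1 = (\<lambda>x. - t1 x)"
    by simp
  have "cube3 (rE k) t1 = \<phi> (rE 1 (indicator {1}))"
    using E e1 unfolding intertwines_def t1_def by simp
  then show "\<phi> (indicator {0}) = cube3 (rE k) t1"
    by (simp only: rE_1_indicator_1)
qed

lemma lin_on_Dsp1_decompose:
  assumes lin: "lin_on (Dsp 1) \<phi>" and v: "v \<in> Dsp 1"
  shows "\<phi> v = (\<lambda>y. v 0 * \<phi> (indicator {0}) y + v 1 * \<phi> (indicator {1}) y)"
proof -
  have lin_add: "\<phi> (\<lambda>x. a x + b x) = (\<lambda>y. \<phi> a y + \<phi> b y)" if "a \<in> Dsp 1" "b \<in> Dsp 1" for a b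
    using lin that unfolding lin_on_def by blast
  have lin_scale: "\<phi> (\<lambda>x. c * a x) = (\<lambda>y. c * \<phi> a y)" if "a \<in> Dsp 1" for c a
    using lin that unfolding lin_on_def by blast
  have e: "indicator {0} \<in> Dsp 1" "indicator {1} \<in> Dsp 1"
    and scaled: "(\<lambda>x. v 0 * indicator {0} x) \<in> Dsp 1" "(\<lambda>x. v 1 * indicator {1} x) \<in> Dsp 1"
    by (simp_all add: Dsp_def)
  have "v = (\<lambda>x. (\<lambda>x. v 0 * indicator {0} x) x + (\<lambda>x. v 1 * indicator {1} x) x)"
    using v by (auto simp: Dsp_def fun_eq_iff indicator_def)
  then have "\<phi> v = \<phi> (\<lambda>x. (\<lambda>x. v 0 * indicator {0} x) x + (\<lambda>x. v 1 * indicator {1} x) x)"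
    by (rule arg_cong)
  also have "\<dots> = (\<lambda>y. v 0 * \<phi> (indicator {0}) y + v 1 * \<phi> (indicator {1}) y)"
    unfolding lin_add[OF scaled] lin_scale[OF e(1)] lin_scale[OF e(2)] ..
  finally show ?thesis .
qed

lemma not_D_half_occurs_in_Sym3:
  assumes e: "e * e = 1"
  shows "\<not> D_half_occurs_in k (Sym3 e (\<lambda>i. i \<le> k))"
proof
  assume "D_half_occurs_in k (Sym3 e (\<lambda>i. i \<le> k))"
  then obtain \<phi> where emb: "D_half_embedding (Sym3 e (\<lambda>i. i \<le> k)) (cube3 (rE k)) (cube3 (rF k)) (cube3 (rH k)) \<phi>"
    unfolding D_half_occurs_in_def by blast
  note t1 = D_half_embedding_lowest_vector[OF emb]
  have "\<phi> (indicator {1}) = (\<lambda>_. 0)"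
  proof (rule lowest_weight_cyclic_tensor_eq_0)
    show "\<phi> (indicator {1}) \<in> tens3 (\<lambda>i. i \<le> k)"
      using t1(1) by (rule Sym3_tens3)
    show "\<phi> (indicator {1}) (a, b, c) = \<phi> (indicator {1}) (b, c, a)" for a b c
      using t1(1) e by (rule Sym3_cyclic)
    show "cube3 (rF k) (\<phi> (indicator {1})) = (\<lambda>_. 0)"
      by (rule t1(3))
    show "cube3 (rH k) (\<phi> (indicator {1})) = (\<lambda>x. - \<phi> (indicator {1}) x)"
      by (rule t1(4))
  qed
  with t1(2) show False ..
qed

lemma symproj_D_half_lowest_vector:
  assumes emb: "D_half_embedding (tens3 (\<lambda>i. i \<le> k)) (cube3 (rE k)) (cube3 (rF k)) (cube3 (rH k)) \<phi>"
    and e: "e * e = 1"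
  shows "symproj e (\<phi> (indicator {1})) = (\<lambda>_. 0)"
proof (rule lowest_weight_cyclic_tensor_eq_0)
  note t1 = D_half_embedding_lowest_vector[OF emb]
  have S: "symproj e (\<phi> (indicator {1})) \<in> Sym3 e (\<lambda>i. i \<le> k)"
    using t1(1) e by (rule symproj_in_Sym3)
  then show "symproj e (\<phi> (indicator {1})) \<in> tens3 (\<lambda>i. i \<le> k)"
    by (rule Sym3_tens3)
  show "symproj e (\<phi> (indicator {1})) (a, b, c) = symproj e (\<phi> (indicator {1})) (b, c, a)" for a b c
    using S e by (rule Sym3_cyclic)
  show "cube3 (rF k) (symproj e (\<phi> (indicator {1}))) = (\<lambda>_. 0)"
    unfolding cube3_symproj[OF weighted_shift_rF] t1(3) by (rule symproj_zero)
  show "cube3 (rH k) (symproj e (\<phi> (indicator {1}))) = (\<lambda>x. - symproj e (\<phi> (indicator {1})) x)"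
    unfolding cube3_symproj[OF weighted_shift_rH] t1(4)
    using symproj_scale[of e "-1" "\<phi> (indicator {1})"] by simp
qed

lemma D_half_embedding_image_M3:
  assumes emb: "D_half_embedding (tens3 (\<lambda>i. i \<le> k)) (cube3 (rE k)) (cube3 (rF k)) (cube3 (rH k)) \<phi>"
  shows "\<phi> ` Dsp 1 \<subseteq> M3 (\<lambda>i. i \<le> k)"
proof (rule image_subsetI)
  fix v
  assume v: "v \<in> Dsp 1"
  have lin: "lin_on (Dsp 1) \<phi>" and img: "\<phi> ` Dsp 1 \<subseteq> tens3 (\<lambda>i. i \<le> k)"
    using emb unfolding D_half_embedding_def by auto
  note t1 = symproj_D_half_lowest_vector[OF emb]
  have t0: "symproj e (\<phi> (indicator {0})) = (\<lambda>_. 0)" if e: "e * e = 1" for e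
    unfolding D_half_embedding_lowest_vector(5)[OF emb] cube3_symproj[OF weighted_shift_rE, symmetric] t1[OF e]
    by (simp add: cube3_def rE_def fun_eq_iff)
  have "symproj e (\<phi> v) = (\<lambda>_. 0)" if "e * e = 1" for e
    unfolding lin_on_Dsp1_decompose[OF lin v] symproj_add symproj_scale t0[OF that] t1[OF that]
    by simp
  then have "symz (\<phi> v) = (\<lambda>_. 0)" "altz (\<phi> v) = (\<lambda>_. 0)"
    unfolding symz_eq_symproj altz_eq_symproj by simp_all
  with v img show "\<phi> v \<in> M3 (\<lambda>i. i \<le> k)"
    unfolding M3_def by blast
qed

section \<open>Equivariant maps from the symmetric cube of D_(a,b)\<close>

lemma cube3_rE_tens3:
  assumes "t \<in> tens3 (\<lambda>i. i \<le> k)"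
  shows "cube3 (rE k) t \<in> tens3 (\<lambda>i. i \<le> k)"
proof -
  have outside: "t (a, b, c) = 0" if "\<not> (a \<le> k \<and> b \<le> k \<and> c \<le> k)" for a b c
    using assms that unfolding tens3_def by blast
  \<comment> \<open>Above k the coefficient k - i of rE truncates to 0.\<close>
  have "cube3 (rE k) t (a, b, c) = 0" if "\<not> (a \<le> k \<and> b \<le> k \<and> c \<le> k)" for a b c
    using that by (auto simp: cube3_weighted_shift[OF weighted_shift_rE] outside)
  then show ?thesis
    unfolding tens3_def by blast
qed

lemma cube3_rE_Sym3:
  assumes t: "t \<in> Sym3 e (\<lambda>i. i \<le> k)" and e: "e * e = 1"
  shows "cube3 (rE k) t \<in> Sym3 e (\<lambda>i. i \<le> k)"
proof -
  have "cube3 (rE k) t = symproj e (cube3 (rE k) t)"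
    using symproj_Sym3[OF t e] cube3_symproj[OF weighted_shift_rE, where e = e and t = t] by simp
  also have "\<dots> \<in> Sym3 e (\<lambda>i. i \<le> k)"
    using cube3_rE_tens3[OF Sym3_tens3[OF t]] e by (rule symproj_in_Sym3)
  finally show ?thesis .
qed

lemma tprod_in_S3:
  assumes t: "t \<in> Sym3 e (\<lambda>i. i \<le> k)" and u: "u \<in> Sym3 e (\<lambda>j. j \<le> l)" and e: "e * e = 1"
  shows "tprod t u \<in> S3 (supp2 k l)"
proof -
  have "tprod t u \<in> tens3 (supp2 k l)"
    using Sym3_tens3[OF t] Sym3_tens3[OF u] by (auto simp: tens3_def tprod_def supp2_def)
  moreover have "tprod t u (p2, p1, p3) = tprod t u (p1, p2, p3) \<and> tprod t u (p1, p3, p2) = tprod t u (p1, p2, p3)"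
    for p1 p2 p3
  proof -
    obtain a1 b1 a2 b2 a3 b3 where p: "p1 = (a1, b1)" "p2 = (a2, b2)" "p3 = (a3, b3)"
      by (cases p1, cases p2, cases p3) auto
    have ee: "(e * x) * (e * y) = x * y" for x y :: complex
      using e by (simp add: mult_ac)
    show ?thesis
      unfolding p tprod_def prod.case Sym3_swap[OF t, where a = a1 and b = a2 and c = a3]
        Sym3_swap[OF u, where a = b1 and b = b2 and c = b3] ee
      by (rule conjI refl)+
  qed
  ultimately show ?thesis
    unfolding S3_def by blast
qed

lemma tprod_cube3_act_fst:
  assumes "weighted_shift X g h"
  shows "cube3 (act_fst X) (tprod t u) = tprod (cube3 X t) u"
  using assms unfolding weighted_shift_def
  by (auto simp: fun_eq_iff cube3_def act_fst_def tprod_def algebra_simps)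

lemma tprod_add: "tprod (\<lambda>x. t x + t' x) u = (\<lambda>y. tprod t u y + tprod t' u y)"
  by (simp add: tprod_def fun_eq_iff distrib_right split: prod.splits)

lemma tprod_scale: "tprod (\<lambda>x. c * t x) u = (\<lambda>y. c * tprod t u y)"
  by (simp add: tprod_def fun_eq_iff split: prod.splits)

lemma linear_functional_sum:
  fixes f :: "('a \<Rightarrow> 'b :: comm_ring_1) \<Rightarrow> 'b"
  assumes add: "\<And>v w. v \<in> A \<Longrightarrow> w \<in> A \<Longrightarrow> (\<lambda>x. v x + w x) \<in> A \<and> f (\<lambda>x. v x + w x) = f v + f w"
    and scale: "\<And>c v. v \<in> A \<Longrightarrow> (\<lambda>x. c * v x) \<in> A \<and> f (\<lambda>x. c * v x) = c * f v"
    and zero: "(\<lambda>_. 0) \<in> A"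
    and g: "\<And>i. i \<in> I \<Longrightarrow> g i \<in> A"
    and "finite I"
  shows "(\<lambda>x. \<Sum>i\<in>I. c i * g i x) \<in> A \<and> f (\<lambda>x. \<Sum>i\<in>I. c i * g i x) = (\<Sum>i\<in>I. c i * f (g i))"
  using \<open>finite I\<close> g
proof (induction I)
  case empty
  have "f (\<lambda>x. 0 * (\<lambda>_. 0) x) = 0 * f (\<lambda>_. 0)"
    using scale[OF zero] by blast
  then show ?case
    using zero by simp
next
  case (insert i I)
  then have "(\<lambda>x. c i * g i x) \<in> A" "(\<lambda>x. \<Sum>i\<in>I. c i * g i x) \<in> A"
    using scale by auto
  with insert show ?case
    using add[of "\<lambda>x. c i * g i x" "\<lambda>x. \<Sum>i\<in>I. c i * g i x"] scale[of "g i" "c i"] by simp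
qed

definition box3 :: "nat \<Rightarrow> (nat \<times> nat \<times> nat) set" where
  "box3 k = {..k} \<times> {..k} \<times> {..k}"

lemma finite_box3: "finite (box3 k)"
  by (simp add: box3_def)

lemma tens3_expand:
  assumes "t \<in> tens3 (\<lambda>i. i \<le> k)"
  shows "t = (\<lambda>x. \<Sum>i\<in>box3 k. t i * indicator ({i} \<inter> box3 k) x)"
proof
  fix x
  have "(\<Sum>i\<in>box3 k. t i * indicator ({i} \<inter> box3 k) x) = (if x \<in> box3 k then t x else 0)"
    by (simp add: indicator_def box3_def if_distrib[of "\<lambda>y. _ * y"] cong: if_cong)
  also have "\<dots> = t x"
    using assms by (cases x) (auto simp: box3_def tens3_def)
  finally show "t x = (\<Sum>i\<in>box3 k. t i * indicator ({i} \<inter> box3 k) x)" ..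
qed

lemma cube3_rF_indicator:
  assumes "(p, q, r) \<in> box3 k"
  shows "cube3 (rF k) (indicator ({(p, q, r)} \<inter> box3 k)) =
    (\<lambda>x. indicator ({(Suc p, q, r)} \<inter> box3 k) x + indicator ({(p, Suc q, r)} \<inter> box3 k) x
       + (indicator ({(p, q, Suc r)} \<inter> box3 k) x :: complex))"
proof (rule ext, clarify)
  fix x1 x2 x3
  show "cube3 (rF k) (indicator ({(p, q, r)} \<inter> box3 k)) (x1, x2, x3) =
    indicator ({(Suc p, q, r)} \<inter> box3 k) (x1, x2, x3) + indicator ({(p, Suc q, r)} \<inter> box3 k) (x1, x2, x3)
       + (indicator ({(p, q, Suc r)} \<inter> box3 k) (x1, x2, x3) :: complex)"
  proof -
    have "(if x1 = 0 \<or> k < x1 then 0 else indicator ({(p, q, r)} \<inter> box3 k) (x1 - 1, x2, x3))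
        = (indicator ({(Suc p, q, r)} \<inter> box3 k) (x1, x2, x3) :: complex)"
      using assms by (cases x1) (auto simp: indicator_def box3_def)
    moreover have "(if x2 = 0 \<or> k < x2 then 0 else indicator ({(p, q, r)} \<inter> box3 k) (x1, x2 - 1, x3))
        = (indicator ({(p, Suc q, r)} \<inter> box3 k) (x1, x2, x3) :: complex)"
      using assms by (cases x2) (auto simp: indicator_def box3_def)
    moreover have "(if x3 = 0 \<or> k < x3 then 0 else indicator ({(p, q, r)} \<inter> box3 k) (x1, x2, x3 - 1))
        = (indicator ({(p, q, Suc r)} \<inter> box3 k) (x1, x2, x3) :: complex)"
      using assms by (cases x3) (auto simp: indicator_def box3_def)
    ultimately show ?thesis
      by (simp only: cube3_rF_apply)
  qed
qed

lemma cube3_rH_indicator: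
  "cube3 (rH k) (indicator ({(p, q, r)} \<inter> B)) =
    (\<lambda>x. of_int (3 * int k - 2 * int (p + q + r)) * (indicator ({(p, q, r)} \<inter> B) x :: complex))"
  by (rule ext, clarify) (auto simp: cube3_rH_apply indicator_def)

lemma indicator_box3_rotate:
  "indicator ({(q, r, p)} \<inter> box3 k) = (\<lambda>(x1, x2, x3). indicator ({(p, q, r)} \<inter> box3 k) (x3, x1, x2))"
  by (rule ext, clarify) (auto simp: indicator_def box3_def)

lemma symproj_rotate: "symproj e (\<lambda>(x1, x2, x3). v (x3, x1, x2)) = symproj e v"
  by (simp add: symproj_def fun_eq_iff add_ac)

definition box_reflect :: "nat \<Rightarrow> (nat \<times> nat \<times> nat \<Rightarrow> complex) \<Rightarrow> nat \<times> nat \<times> nat \<Rightarrow> complex" where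
  "box_reflect k a = (\<lambda>(p, q, r). if p \<le> k \<and> q \<le> k \<and> r \<le> k then a (k - p, k - q, k - r) else 0)"

lemma cube3_rF_box_reflect:
  assumes outside: "\<And>p q r. \<not> (p \<le> k \<and> q \<le> k \<and> r \<le> k) \<Longrightarrow> a (p, q, r) = 0"
  shows "cube3 (rF k) (box_reflect k a) (x1, x2, x3) =
    (if x1 \<le> k \<and> x2 \<le> k \<and> x3 \<le> k
     then a (Suc (k - x1), k - x2, k - x3) + a (k - x1, Suc (k - x2), k - x3) + a (k - x1, k - x2, Suc (k - x3))
     else 0)"
proof -
  have "(if x1 = 0 \<or> k < x1 then 0 else box_reflect k a (x1 - 1, x2, x3))
      = (if x1 \<le> k \<and> x2 \<le> k \<and> x3 \<le> k then a (Suc (k - x1), k - x2, k - x3) else 0)"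
    using outside by (cases x1) (auto simp: box_reflect_def Suc_diff_Suc)
  moreover have "(if x2 = 0 \<or> k < x2 then 0 else box_reflect k a (x1, x2 - 1, x3))
      = (if x1 \<le> k \<and> x2 \<le> k \<and> x3 \<le> k then a (k - x1, Suc (k - x2), k - x3) else 0)"
    using outside by (cases x2) (auto simp: box_reflect_def Suc_diff_Suc)
  moreover have "(if x3 = 0 \<or> k < x3 then 0 else box_reflect k a (x1, x2, x3 - 1))
      = (if x1 \<le> k \<and> x2 \<le> k \<and> x3 \<le> k then a (k - x1, k - x2, Suc (k - x3)) else 0)"
    using outside by (cases x3) (auto simp: box_reflect_def Suc_diff_Suc)
  ultimately show ?thesis
    by (simp add: cube3_rF_apply)
qed

definition Sym3_basis :: "complex \<Rightarrow> nat \<Rightarrow> nat \<times> nat \<times> nat \<Rightarrow> nat \<times> nat \<times> nat \<Rightarrow> complex" where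
  "Sym3_basis e k i = symproj e (indicator ({i} \<inter> box3 k))"

lemma Sym3_basis_in_Sym3:
  assumes "e * e = 1"
  shows "Sym3_basis e k i \<in> Sym3 e (\<lambda>i. i \<le> k)"
  unfolding Sym3_basis_def using _ assms
  by (rule symproj_in_Sym3) (auto simp: tens3_def indicator_def box3_def)

lemma Sym3_linear_functional_expand:
  fixes f :: "(nat \<times> nat \<times> nat \<Rightarrow> complex) \<Rightarrow> complex"
  assumes e: "e * e = 1"
    and add: "\<And>v w. v \<in> Sym3 e (\<lambda>i. i \<le> k) \<Longrightarrow> w \<in> Sym3 e (\<lambda>i. i \<le> k) \<Longrightarrow>
      f (\<lambda>x. v x + w x) = f v + f w"
    and scale: "\<And>c v. v \<in> Sym3 e (\<lambda>i. i \<le> k) \<Longrightarrow> f (\<lambda>x. c * v x) = c * f v"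
    and t: "t \<in> Sym3 e (\<lambda>i. i \<le> k)"
  shows "f t = (\<Sum>i\<in>box3 k. t i * f (Sym3_basis e k i))"
proof -
  have "t = symproj e t"
    using symproj_Sym3[OF t e] by simp
  also have "\<dots> = symproj e (\<lambda>x. \<Sum>i\<in>box3 k. t i * indicator ({i} \<inter> box3 k) x)"
    by (rule arg_cong[OF tens3_expand[OF Sym3_tens3[OF t]]])
  also have "\<dots> = (\<lambda>x. \<Sum>i\<in>box3 k. t i * Sym3_basis e k i x)"
    unfolding Sym3_basis_def by (rule symproj_sum)
  finally have "f t = f (\<lambda>x. \<Sum>i\<in>box3 k. t i * Sym3_basis e k i x)"
    by (rule arg_cong)
  also have "\<dots> = (\<Sum>i\<in>box3 k. t i * f (Sym3_basis e k i))"
  proof (rule conjunct2[OF linear_functional_sum])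
    show "(\<lambda>x. v x + w x) \<in> Sym3 e (\<lambda>i. i \<le> k) \<and> f (\<lambda>x. v x + w x) = f v + f w"
      if "v \<in> Sym3 e (\<lambda>i. i \<le> k)" "w \<in> Sym3 e (\<lambda>i. i \<le> k)" for v w
      using that by (simp add: Sym3_add add)
    show "(\<lambda>x. c * v x) \<in> Sym3 e (\<lambda>i. i \<le> k) \<and> f (\<lambda>x. c * v x) = c * f v"
      if "v \<in> Sym3 e (\<lambda>i. i \<le> k)" for c v
      using that by (simp add: Sym3_scale scale)
  qed (use Sym3_zero Sym3_basis_in_Sym3[OF e] finite_box3 in blast)+
  finally show ?thesis .
qed

lemma cyclic_tensor_eq_0_if_dual_F_annihilates:
  fixes a :: "nat \<times> nat \<times> nat \<Rightarrow> complex"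
  assumes outside: "\<And>p q r. \<not> (p \<le> k \<and> q \<le> k \<and> r \<le> k) \<Longrightarrow> a (p, q, r) = 0"
    and cyc: "\<And>p q r. a (p, q, r) = a (q, r, p)"
    and weight: "\<And>p q r. a (p, q, r) \<noteq> 0 \<Longrightarrow> 2 * (p + q + r) + 1 = 3 * k"
    and dual_F: "\<And>p q r. p \<le> k \<Longrightarrow> q \<le> k \<Longrightarrow> r \<le> k \<Longrightarrow>
      a (Suc p, q, r) + a (p, Suc q, r) + a (p, q, Suc r) = 0"
  shows "a (p, q, r) = 0"
proof -
  \<comment> \<open>Reflecting the indices i to k - i turns the dual relations into those of an F-annihilated tensor.\<close>
  have "box_reflect k a = (\<lambda>_. 0)"
  proof (rule cyclic_tensor_eq_0_if_F_annihilates)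
    show "box_reflect k a (p, q, r) = box_reflect k a (q, r, p)" for p q r
      using cyc[of "k - p" "k - q" "k - r"] by (auto simp: box_reflect_def)
    show "p \<le> k \<and> q \<le> k \<and> r \<le> k \<and> 2 * (p + q + r) = 3 * k + 1"
      if "box_reflect k a (p, q, r) \<noteq> 0" for p q r
      using that weight[of "k - p" "k - q" "k - r"] by (auto simp: box_reflect_def split: if_splits)
    show "cube3 (rF k) (box_reflect k a) = (\<lambda>_. 0)"
      by (rule ext, clarify) (simp add: cube3_rF_box_reflect outside dual_F)
  qed
  show ?thesis
  proof (cases "p \<le> k \<and> q \<le> k \<and> r \<le> k")
    case True
    then have "a (p, q, r) = box_reflect k a (k - p, k - q, k - r)"
      by (simp add: box_reflect_def)
    with \<open>box_reflect k a = (\<lambda>_. 0)\<close> show ?thesis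
      by simp
  qed (rule outside)
qed

lemma Sym3_basis_weight:
  fixes f :: "(nat \<times> nat \<times> nat \<Rightarrow> complex) \<Rightarrow> complex"
  assumes e: "e * e = 1"
    and scale: "\<And>c v. v \<in> Sym3 e (\<lambda>i. i \<le> k) \<Longrightarrow> f (\<lambda>x. c * v x) = c * f v"
    and H: "\<And>v. v \<in> Sym3 e (\<lambda>i. i \<le> k) \<Longrightarrow> f (cube3 (rH k) v) = f v"
    and nonzero: "f (Sym3_basis e k (p, q, r)) \<noteq> 0"
  shows "2 * (p + q + r) + 1 = 3 * k"
proof -
  define w :: complex where "w = of_int (3 * int k - 2 * int (p + q + r))"
  have "f (Sym3_basis e k (p, q, r)) = f (cube3 (rH k) (Sym3_basis e k (p, q, r)))"
    by (simp add: H Sym3_basis_in_Sym3[OF e])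
  also have "\<dots> = w * f (Sym3_basis e k (p, q, r))"
    unfolding Sym3_basis_def cube3_symproj[OF weighted_shift_rH] cube3_rH_indicator symproj_scale
    using scale[OF Sym3_basis_in_Sym3[OF e]] by (simp add: Sym3_basis_def w_def)
  finally have "w = of_int 1"
    using nonzero by simp
  then show ?thesis
    unfolding w_def of_int_eq_iff by linarith
qed

lemma Sym3_basis_dual_F:
  fixes f :: "(nat \<times> nat \<times> nat \<Rightarrow> complex) \<Rightarrow> complex"
  assumes e: "e * e = 1"
    and add: "\<And>v w. v \<in> Sym3 e (\<lambda>i. i \<le> k) \<Longrightarrow> w \<in> Sym3 e (\<lambda>i. i \<le> k) \<Longrightarrow>
      f (\<lambda>x. v x + w x) = f v + f w"
    and F: "\<And>v. v \<in> Sym3 e (\<lambda>i. i \<le> k) \<Longrightarrow> f (cube3 (rF k) v) = 0"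
    and box: "p \<le> k" "q \<le> k" "r \<le> k"
  shows "f (Sym3_basis e k (Suc p, q, r)) + f (Sym3_basis e k (p, Suc q, r)) + f (Sym3_basis e k (p, q, Suc r)) = 0"
proof -
  note basis = Sym3_basis_in_Sym3[OF e]
  have "(p, q, r) \<in> box3 k"
    using box by (simp add: box3_def)
  have "0 = f (cube3 (rF k) (Sym3_basis e k (p, q, r)))"
    by (simp add: F basis)
  also have "\<dots> = f (\<lambda>x. (\<lambda>x. Sym3_basis e k (Suc p, q, r) x + Sym3_basis e k (p, Suc q, r) x) x
      + Sym3_basis e k (p, q, Suc r) x)"
    unfolding Sym3_basis_def cube3_symproj[OF weighted_shift_rF] cube3_rF_indicator[OF \<open>(p, q, r) \<in> box3 k\<close>]
    by (simp add: symproj_add)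
  also have "\<dots> = f (Sym3_basis e k (Suc p, q, r)) + f (Sym3_basis e k (p, Suc q, r)) + f (Sym3_basis e k (p, q, Suc r))"
    by (simp add: add basis Sym3_add)
  finally show ?thesis
    by simp
qed

lemma highest_weight_covector_Sym3_eq_0:
  fixes f :: "(nat \<times> nat \<times> nat \<Rightarrow> complex) \<Rightarrow> complex"
  assumes e: "e * e = 1"
    and add: "\<And>v w. v \<in> Sym3 e (\<lambda>i. i \<le> k) \<Longrightarrow> w \<in> Sym3 e (\<lambda>i. i \<le> k) \<Longrightarrow>
      f (\<lambda>x. v x + w x) = f v + f w"
    and scale: "\<And>c v. v \<in> Sym3 e (\<lambda>i. i \<le> k) \<Longrightarrow> f (\<lambda>x. c * v x) = c * f v"
    and F: "\<And>v. v \<in> Sym3 e (\<lambda>i. i \<le> k) \<Longrightarrow> f (cube3 (rF k) v) = 0"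
    and H: "\<And>v. v \<in> Sym3 e (\<lambda>i. i \<le> k) \<Longrightarrow> f (cube3 (rH k) v) = f v"
    and t: "t \<in> Sym3 e (\<lambda>i. i \<le> k)"
  shows "f t = 0"
proof -
  define a where "a i = f (Sym3_basis e k i)" for i
  have a_zero: "a (p, q, r) = 0" for p q r
  proof (rule cyclic_tensor_eq_0_if_dual_F_annihilates[where k = k])
    show "a (p, q, r) = 0" if "\<not> (p \<le> k \<and> q \<le> k \<and> r \<le> k)" for p q r
    proof -
      have "indicator ({(p, q, r)} \<inter> box3 k) = (\<lambda>_. 0 :: complex)"
        using that by (auto simp: box3_def indicator_def)
      then show ?thesis
        using scale[OF Sym3_basis_in_Sym3[OF e], of 0 undefined]
        by (simp add: a_def Sym3_basis_def symproj_zero)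
    qed
    show "a (p, q, r) = a (q, r, p)" for p q r
      unfolding a_def Sym3_basis_def indicator_box3_rotate[of q r p] symproj_rotate ..
    show "2 * (p + q + r) + 1 = 3 * k" if "a (p, q, r) \<noteq> 0" for p q r
      using e scale H that unfolding a_def by (rule Sym3_basis_weight)
    show "a (Suc p, q, r) + a (p, Suc q, r) + a (p, q, Suc r) = 0"
      if "p \<le> k" "q \<le> k" "r \<le> k" for p q r
      using e add F that unfolding a_def by (rule Sym3_basis_dual_F)
  qed
  have "f t = (\<Sum>i\<in>box3 k. t i * a i)"
    unfolding a_def using e add scale t by (rule Sym3_linear_functional_expand)
  also have "\<dots> = 0"
    using a_zero by (intro sum.neutral ballI) (metis prod_cases3 mult_zero_right)
  finally show ?thesis .
qed

lemma intertwines_tprod_act_fst: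
  assumes "intertwines (S3 (supp2 k l)) \<psi> (cube3 (act_fst X)) (act_fst Y)" "weighted_shift X g h"
    and "tprod v u \<in> S3 (supp2 k l)"
  shows "\<psi> (tprod (cube3 X v) u) = act_fst Y (\<psi> (tprod v u))"
  using assms(1,3) unfolding intertwines_def tprod_cube3_act_fst[OF assms(2), symmetric] by blast

lemma so13_equivariant_S3_tprod_highest_row_eq_0:
  assumes so: "so13_equivariant_S3 k l \<psi>" and e: "e * e = 1"
    and t: "t \<in> Sym3 e (\<lambda>i. i \<le> k)" and u: "u \<in> Sym3 e (\<lambda>j. j \<le> l)"
  shows "\<psi> (tprod t u) (0, y) = 0"
proof -
  have lin: "lin_on (S3 (supp2 k l)) \<psi>"
    and F: "intertwines (S3 (supp2 k l)) \<psi> (cube3 (act_fst (rF k))) (act_fst (rF 1))"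
    and H: "intertwines (S3 (supp2 k l)) \<psi> (cube3 (act_fst (rH k))) (act_fst (rH 1))"
    using so unfolding so13_equivariant_S3_def Let_def by auto
  have in_S3: "tprod v u \<in> S3 (supp2 k l)" if "v \<in> Sym3 e (\<lambda>i. i \<le> k)" for v
    using that u e by (rule tprod_in_S3)
  show ?thesis
  proof (rule highest_weight_covector_Sym3_eq_0[OF e _ _ _ _ t, where f = "\<lambda>v. \<psi> (tprod v u) (0, y)"])
    show "\<psi> (tprod (\<lambda>x. v x + w x) u) (0, y) = \<psi> (tprod v u) (0, y) + \<psi> (tprod w u) (0, y)"
      if "v \<in> Sym3 e (\<lambda>i. i \<le> k)" "w \<in> Sym3 e (\<lambda>i. i \<le> k)" for v w
      using lin in_S3[OF that(1)] in_S3[OF that(2)] unfolding tprod_add lin_on_def by simp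
    show "\<psi> (tprod (\<lambda>x. c * v x) u) (0, y) = c * \<psi> (tprod v u) (0, y)"
      if "v \<in> Sym3 e (\<lambda>i. i \<le> k)" for c v
      using lin in_S3[OF that] unfolding tprod_scale lin_on_def by simp
    show "\<psi> (tprod (cube3 (rF k) v) u) (0, y) = 0" if "v \<in> Sym3 e (\<lambda>i. i \<le> k)" for v
      by (simp add: intertwines_tprod_act_fst[OF F weighted_shift_rF in_S3[OF that]] act_fst_def rF_def)
    show "\<psi> (tprod (cube3 (rH k) v) u) (0, y) = \<psi> (tprod v u) (0, y)" if "v \<in> Sym3 e (\<lambda>i. i \<le> k)" for v
      by (simp add: intertwines_tprod_act_fst[OF H weighted_shift_rH in_S3[OF that]] act_fst_def rH_def)
  qed
qed

lemma so13_equivariant_S3_tprod_eq_0: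
  assumes so: "so13_equivariant_S3 k l \<psi>" and e: "e * e = 1"
    and t: "t \<in> Sym3 e (\<lambda>i. i \<le> k)" and u: "u \<in> Sym3 e (\<lambda>j. j \<le> l)"
  shows "\<psi> (tprod t u) = (\<lambda>_. 0)"
proof (rule ext, clarify)
  fix x y :: nat
  have img: "\<psi> ` S3 (supp2 k l) \<subseteq> Dsp2 1 1"
    and E: "intertwines (S3 (supp2 k l)) \<psi> (cube3 (act_fst (rE k))) (act_fst (rE 1))"
    using so unfolding so13_equivariant_S3_def Let_def by auto
  note row_0 = so13_equivariant_S3_tprod_highest_row_eq_0[OF so e _ u]
  consider "x = 0" | "x = 1" | "1 < x"
    by linarith
  then show "\<psi> (tprod t u) (x, y) = 0"
  proof cases
    case 1
    then show ?thesis
      using row_0[OF t] by simp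
  next
    case 2
    have "\<psi> (tprod t u) (1, y) = \<psi> (tprod (cube3 (rE k) t) u) (0, y)"
      by (simp add: intertwines_tprod_act_fst[OF E weighted_shift_rE tprod_in_S3[OF t u e]] act_fst_def rE_def)
    also have "\<dots> = 0"
      using row_0[OF cube3_rE_Sym3[OF t e]] .
    finally show ?thesis
      using 2 by simp
  next
    case 3
    then show ?thesis
      using img tprod_in_S3[OF t u e] unfolding Dsp2_def by fastforce
  qed
qed

theorem mainTheorem7:
  shows "(\<forall>k::nat.
            \<not> D_half_occurs_in k (S3 (\<lambda>i. i \<le> k)) \<and>
            \<not> D_half_occurs_in k (L3 (\<lambda>i. i \<le> k)) \<and>
            (\<forall>\<phi>. D_half_embedding (tens3 (\<lambda>i. i \<le> k))
                     (cube3 (rE k)) (cube3 (rF k)) (cube3 (rH k)) \<phi>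
                  \<longrightarrow> \<phi> ` Dsp 1 \<subseteq> M3 (\<lambda>i. i \<le> k)))
       \<and> (\<forall>(k::nat) (l::nat) \<psi>. so13_equivariant_S3 k l \<psi> \<longrightarrow>
            (\<forall>t u. (t \<in> S3 (\<lambda>i. i \<le> k) \<and> u \<in> S3 (\<lambda>j. j \<le> l)) \<or>
                   (t \<in> L3 (\<lambda>i. i \<le> k) \<and> u \<in> L3 (\<lambda>j. j \<le> l))
                   \<longrightarrow> \<psi> (tprod t u) = (\<lambda>_. 0)))"
  using not_D_half_occurs_in_Sym3[of 1] not_D_half_occurs_in_Sym3[of "-1"] D_half_embedding_image_M3
    so13_equivariant_S3_tprod_eq_0[of _ _ _ 1] so13_equivariant_S3_tprod_eq_0[of _ _ _ "-1"]
  unfolding S3_eq_Sym3 L3_eq_Sym3 by auto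

end
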